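(* For each $i\in\{1,2,3\}$, the osculating circle of $\mathcal{E}$ at $P_i$ (the circle centered at $P_i''$ passing through $P_i$) passes through both $M$ and the cusp $P_i'$. Equivalently, the circle through $M,P_i,P_i'$ osculates $\mathcal{E}$ at $P_i$, and its center lies on the evolute of $\mathcal{E}$ at parameter $t_i$.
   Context: Let $a>b>0$ and $c>0$ with $c^2=a^2-b^2$. Let $\mathcal{E}$ be the ellipse $x^2/a^2+y^2/b^2=1$ with center $O=(0,0)$, parametrized by $P(t)=(a\cos t,b\sin t)$. Fix $u\in\mathbb{R}$ and let $M=M_u=(a\cos u,b\sin u)\in\mathcal{E}$. Let $\Delta_u(t)=(x_u(t),y_u(t))$, where $x_u(t)=\frac1a\big(c^2(1+\cos(t+u))\cos t-a^2\cos u\big)$ and $y_u(t)=\frac1b\big(c^2\cos t\sin(t+u)-c^2\sin t-a^2\sin u\big)$ (the negative pedal curve of $\mathcal{E}$ with respect to $M$, i.e. the envelope of the lines through $P(t)$ perpendicular to $P(t)-M$). For $i=1,2,3$ let $t_i=-u/3-2\pi(i-1)/3$, $P_i=P(t_i)$, $P_i'=\Delta_u(t_i)$ (the cusps), and $P_i''=\left(\frac{c^2\cos^3 t_i}{a},-\frac{c^2\sin^3 t_i}{b}\right)$, the point of the evolute $\mathcal{E}^*(t)=\left(\frac{c^2\cos^3t}{a},-\frac{c^2\sin^3 t}{b}\right)$ of $\mathcal{E}$ at $t_i$, i.e. the center of curvature of $\mathcal{E}$ at $P_i$. *)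

theory Defs
  imports "HOL-Analysis.Analysis"
begin

definition ell_pt :: "real \<Rightarrow> real \<Rightarrow> real \<Rightarrow> real \<times> real" where
  "ell_pt a b t = (a * cos t, b * sin t)"

text \<open>Negative pedal curve of the ellipse with respect to M_u (c^2 = a^2 - b^2).\<close>
definition neg_pedal :: "real \<Rightarrow> real \<Rightarrow> real \<Rightarrow> real \<Rightarrow> real \<Rightarrow> real \<times> real" where
  "neg_pedal a b c u t =
     ((c^2 * (1 + cos (t + u)) * cos t - a^2 * cos u) / a,
      (c^2 * cos t * sin (t + u) - c^2 * sin t - a^2 * sin u) / b)"

definition evolute :: "real \<Rightarrow> real \<Rightarrow> real \<Rightarrow> real \<Rightarrow> real \<times> real" where
  "evolute a b c t = (c^2 * (cos t)^3 / a, - (c^2 * (sin t)^3 / b))"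

definition cusp_par :: "real \<Rightarrow> nat \<Rightarrow> real" where
  "cusp_par u i = - u / 3 - 2 * pi * (real i - 1) / 3"

end

theory Submission
  imports Defs
begin

text \<open>
  For \<open>t = t\<^sub>i\<close> we have \<open>u \<equiv> -3t (mod 2\<pi>)\<close>, so both \<open>M = P(-3t)\<close> and the cusp \<open>\<Delta>\<^sub>u(t)\<close> are
  polynomials in \<open>x = cos t\<close>, \<open>y = sin t\<close> by the double- and triple-angle formulas. Their squared
  distances to the centre of curvature \<open>E\<^sup>*(t)\<close> then reduce, using \<open>x\<^sup>2 + y\<^sup>2 = 1\<close> and
  \<open>c\<^sup>2 = a\<^sup>2 - b\<^sup>2\<close>, to the squared radius of curvature \<open>|E\<^sup>*(t) - P(t)|\<^sup>2\<close>.
\<close>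

lemma sin_treble: "sin (3 * x) = 3 * sin x - 4 * sin x ^ 3" for x :: real
proof -
  have "sin (3 * x) = sin (2 * x + x)" by (simp add: algebra_simps)
  also have "\<dots> = 2 * sin x * cos x * cos x + (cos x ^ 2 - sin x ^ 2) * sin x"
    by (simp only: sin_add sin_double cos_double)
  also have "\<dots> = 3 * sin x - 4 * sin x ^ 3"
    using sin_cos_squared_add[of x] by algebra
  finally show ?thesis .
qed

lemma cos_add_2pi_int: "cos (x + 2 * pi * of_int m) = cos x"
  and sin_add_2pi_int: "sin (x + 2 * pi * of_int m) = sin x"
  by (simp_all add: cos_add sin_add)

lemma ell_pt_add_2pi_int: "ell_pt a b (t + 2 * pi * of_int m) = ell_pt a b t"
  by (simp add: ell_pt_def cos_add_2pi_int sin_add_2pi_int)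

lemma neg_pedal_add_2pi_int: "neg_pedal a b c (u + 2 * pi * of_int m) t = neg_pedal a b c u t"
proof -
  have "t + (u + 2 * pi * of_int m) = (t + u) + 2 * pi * of_int m" by simp
  then show ?thesis
    by (simp only: neg_pedal_def cos_add_2pi_int sin_add_2pi_int)
qed

lemma cusp_par_eq: "u = - (3 * cusp_par u i) + 2 * pi * of_int (1 - int i)"
  by (simp add: cusp_par_def field_simps)

lemma osculating_circle_through_ell_pt_neg_triple:
  assumes "a \<noteq> 0" "b \<noteq> 0" "c^2 = a^2 - b^2"
  shows "dist (evolute a b c t) (ell_pt a b (- (3 * t))) = dist (evolute a b c t) (ell_pt a b t)"
proof -
  have "(c^2 * x^3 / a - a * (4 * x^3 - 3 * x))^2 + (- (c^2 * y^3 / b) - b * (4 * y^3 - 3 * y))^2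
      = (c^2 * x^3 / a - a * x)^2 + (- (c^2 * y^3 / b) - b * y)^2"
    if "x^2 + y^2 = 1" for x y
    using assms that by (simp add: field_simps) algebra
  from this[OF sin_cos_squared_add2[of t]] show ?thesis
    by (simp add: dist_prod_def dist_real_def evolute_def ell_pt_def cos_treble_cos sin_treble)
qed

lemma osculating_circle_through_neg_pedal_cusp:
  assumes "a \<noteq> 0" "b \<noteq> 0" "c^2 = a^2 - b^2"
  shows "dist (evolute a b c t) (neg_pedal a b c (- (3 * t)) t) = dist (evolute a b c t) (ell_pt a b t)"
proof -
  have "(c^2 * x^3 / a - (c^2 * (2 * x^2) * x - a^2 * (4 * x^3 - 3 * x)) / a)^2
        + (- (c^2 * y^3 / b) - (- (c^2 * x * (2 * y * x)) - c^2 * y - a^2 * (4 * y^3 - 3 * y)) / b)^2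
      = (c^2 * x^3 / a - a * x)^2 + (- (c^2 * y^3 / b) - b * y)^2"
    if "x^2 + y^2 = 1" for x y
    using assms that by (simp add: field_simps) algebra
  from this[OF sin_cos_squared_add2[of t]] show ?thesis
    by (simp add: dist_prod_def dist_real_def evolute_def ell_pt_def neg_pedal_def
        cos_treble_cos sin_treble cos_double_cos sin_double)
qed

theorem proposition3p3:
  fixes a b c u :: real and i :: nat
  assumes "a > b" and "b > 0" and "c > 0" and "c^2 = a^2 - b^2"
    and "i \<in> {1, 2, 3}"
  shows "dist (evolute a b c (cusp_par u i)) (ell_pt a b u)
           = dist (evolute a b c (cusp_par u i)) (ell_pt a b (cusp_par u i))
       \<and> dist (evolute a b c (cusp_par u i)) (neg_pedal a b c u (cusp_par u i))
           = dist (evolute a b c (cusp_par u i)) (ell_pt a b (cusp_par u i))"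
proof -
  \<comment> \<open>The argument works for every \<open>i\<close>, and only needs \<open>a, b \<noteq> 0\<close>.\<close>
  define t where "t = cusp_par u i"
  have u: "u = - (3 * t) + 2 * pi * of_int (1 - int i)"
    unfolding t_def by (rule cusp_par_eq)
  have "a \<noteq> 0" "b \<noteq> 0" using assms by auto
  with assms(4) have
    "dist (evolute a b c t) (ell_pt a b u) = dist (evolute a b c t) (ell_pt a b t)
     \<and> dist (evolute a b c t) (neg_pedal a b c u t) = dist (evolute a b c t) (ell_pt a b t)"
    unfolding u ell_pt_add_2pi_int neg_pedal_add_2pi_int
    by (simp add: osculating_circle_through_ell_pt_neg_triple
        osculating_circle_through_neg_pedal_cusp)
  then show ?thesis unfolding t_def .
qed

end
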